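(* Let $q$ be a prime number and $\mathbb{A}=\mathbb{Q}\cap\,]0,1[$. Then $\mathbb{A}\text{-}\mathcal{KS}(q^{2})=\emptyset$.
   Context: Every nonzero rational $\alpha$ is written $\alpha=\alpha_1/\alpha_2$ with $\alpha_1\in\mathbb{Z}$, $\alpha_2$ a positive integer and $\gcd(\alpha_1,\alpha_2)=1$. For an integer $N\ge 2$ and a nonzero rational $\alpha=\alpha_1/\alpha_2$, $N$ is called an $\alpha$-Korselt number if $N\neq\alpha$ and $\alpha_2p-\alpha_1$ divides $\alpha_2N-\alpha_1$ (in $\mathbb{Z}$) for every prime divisor $p$ of $N$. For a subset $\mathbb{A}\subseteq\mathbb{Q}$, $\mathbb{A}\text{-}\mathcal{KS}(N)$ denotes the set of all $\beta\in\mathbb{A}\setminus\{0,N\}$ such that $N$ is a $\beta$-Korselt number. $]0,1[$ denotes the open interval. *)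

theory Defs
  imports Complex_Main "HOL-Computational_Algebra.Primes"
begin

definition korselt :: "rat \<Rightarrow> nat \<Rightarrow> bool" where
  "korselt \<alpha> N \<longleftrightarrow>
     (let (a1, a2) = quotient_of \<alpha> in
        \<alpha> \<noteq> of_nat N \<and>
        (\<forall>p. prime p \<and> p dvd N \<longrightarrow> (a2 * int p - a1) dvd (a2 * int N - a1)))"

definition KS :: "rat set \<Rightarrow> nat \<Rightarrow> rat set" where
  "KS A N = {\<beta> \<in> A - {0, of_nat N}. korselt \<beta> N}"

end

theory Submission
  imports Defs
begin

text \<open>If p is a prime factor of N = p m and alpha = a1/a2 lies in ]0,1[, then
  a2 N - a1 = m (a2 p - a1) + a1 (m - 1), so the Korselt condition at p forces
  a2 p - a1 to divide a1 (m - 1). For 1 < m \<le> p this is impossible, because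
  0 < a1 (m - 1) \<le> a1 (p - 1) < a2 p - a1. The case N = q^2 is m = p = q.\<close>

lemma quotient_of_unit_interval:
  assumes "0 < \<alpha>" "\<alpha> < 1" "quotient_of \<alpha> = (a1, a2)"
  shows "0 < a1" "a1 < a2"
proof -
  have a2_pos: "0 < a2" and \<alpha>_eq: "\<alpha> = of_int a1 / of_int a2"
    using quotient_of_denom_pos[OF assms(3)] quotient_of_div[OF assms(3)] by auto
  have "(0 :: rat) < of_int a1" using assms(1) a2_pos \<alpha>_eq by (simp add: zero_less_divide_iff)
  then show "0 < a1" by simp
  have "(of_int a1 :: rat) < of_int a2" using assms(2) a2_pos \<alpha>_eq by (simp add: divide_less_eq)
  then show "a1 < a2" by simp
qed

lemma dvd_mult_sub_iff_dvd_cofactor: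
  fixes a1 a2 p m :: "'a :: comm_ring_1"
  shows "(a2 * p - a1) dvd (a2 * (p * m) - a1) \<longleftrightarrow> (a2 * p - a1) dvd (a1 * (m - 1))"
proof -
  have "a2 * (p * m) - a1 = m * (a2 * p - a1) + a1 * (m - 1)"
    by (simp add: algebra_simps)
  then show ?thesis by (simp add: dvd_add_right_iff)
qed

lemma not_dvd_mult_sub:
  fixes a1 a2 p m :: int
  assumes "0 < a1" "a1 < a2" "1 < m" "m \<le> p"
  shows "\<not> (a2 * p - a1) dvd (a2 * (p * m) - a1)"
proof
  assume "(a2 * p - a1) dvd (a2 * (p * m) - a1)"
  then have dvd: "(a2 * p - a1) dvd (a1 * (m - 1))"
    by (simp add: dvd_mult_sub_iff_dvd_cofactor)
  have "0 < a1 * (m - 1)" using assms by simp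
  then have "a2 * p - a1 \<le> a1 * (m - 1)" using zdvd_imp_le[OF dvd] by blast
  also have "\<dots> \<le> a1 * (p - 1)" using assms by simp
  also have "\<dots> < a2 * p - a1"
    using mult_strict_right_mono[OF assms(2), of p] assms by (simp add: algebra_simps)
  finally show False by simp
qed

lemma not_korselt_unit_interval:
  assumes "0 < \<alpha>" "\<alpha> < 1" "prime p" "1 < m" "m \<le> p"
  shows "\<not> korselt \<alpha> (p * m)"
proof
  assume korselt: "korselt \<alpha> (p * m)"
  obtain a1 a2 where q: "quotient_of \<alpha> = (a1, a2)" by fastforce
  have "(a2 * int p - a1) dvd (a2 * (int p * int m) - a1)"
    using korselt assms(3) q unfolding korselt_def by auto
  moreover have "\<not> (a2 * int p - a1) dvd (a2 * (int p * int m) - a1)"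
    using not_dvd_mult_sub quotient_of_unit_interval[OF assms(1,2) q] assms(4,5) by simp
  ultimately show False by contradiction
qed

theorem corollary5p6:
  fixes q :: nat
  assumes "prime q"
  shows "KS {x :: rat. 0 < x \<and> x < 1} (q ^ 2) = {}"
  using not_korselt_unit_interval[OF _ _ assms, of _ q] prime_gt_1_nat[OF assms]
  by (auto simp: KS_def power2_eq_square)

end
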